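(* Let $\mathbb{T}$ be a time scale and $\alpha\in(0,1]$. Suppose $f:\mathbb{T}\to\mathbb{R}$ is strictly increasing, $\tilde{\mathbb{T}}:=\mathrm{Ran}(f)$ is a time scale, and $f$ is continuously nabla fractional differentiable of order $1$ at each point of $\mathbb{T}^k$. If $f^{-1}:\tilde{\mathbb{T}}\to\mathbb{T}$ exists, then for $t\in\tilde{\mathbb{T}}^k$ with $\big(\nabla^{(1)}f\big)(f^{-1}(t))\neq 0$, $$\nabla^{(\alpha)}f^{-1}(t)=\begin{cases}\dfrac{(\nu(t))^{1-\alpha}}{\big(\nabla^{(1)}f\big)(f^{-1}(t))} & \text{if } \alpha\neq 1,\\[2ex] \dfrac{1}{\big(\nabla^{(1)}f\big)(f^{-1}(t))} & \text{if } \alpha=1,\end{cases}$$ where $\nu$ and $\nabla^{(\alpha)}f^{-1}$ are computed on the time scale $\tilde{\mathbb{T}}$ and $\nabla^{(1)}f$ on $\mathbb{T}$.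
   Context: A time scale is a nonempty closed subset of $\mathbb{R}$ with the relative topology. On a time scale $\mathbb{S}$, for $t\in\mathbb{S}$: $\rho(t)=\sup\{s\in\mathbb{S}:s<t\}$, $\sigma(t)=\inf\{s\in\mathbb{S}:s>t\}$, $\nu(t)=t-\rho(t)$. If $\mathbb{S}$ has a minimum $m$ with $\sigma(m)>m$ then $\mathbb{S}^k=\mathbb{S}\setminus\{m\}$, else $\mathbb{S}^k=\mathbb{S}$. $U_\delta(t)=(t-\delta,t+\delta)\cap\mathbb{S}$, $U^-_\delta(t)=(t-\delta,t)\cap\mathbb{S}$. Let $Q=\{1/q: q \text{ an odd positive integer}\}$; for $\alpha\in Q$, $x^\alpha$ is the real $q$-th root. Definition: $h:\mathbb{S}\to\mathbb{R}$ is nabla fractional differentiable of order $\alpha$ at $t\in\mathbb{S}^k$ if there is $L\in\mathbb{R}$ such that for every $\varepsilon>0$ there is $\delta>0$ with $|[h(\rho(t))-h(s)]-L[\rho(t)-s]^\alpha|\le\varepsilon|\rho(t)-s|^\alpha$ for all $s\in U_\delta(t)$ if $\alpha\in Q$, resp. all $s\in U^-_\delta(t)$ if $\alpha\notin Q$; then $\nabla^{(\alpha)}h(t):=L$. "Continuously nabla fractional differentiable of order $1$ at each point of $\mathbb{T}^k$" means nabla fractional differentiable of order $1$ at every point of $\mathbb{T}^k$ with $\nabla^{(1)}f$ continuous there. *)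

theory Defs
  imports "HOL-Analysis.Analysis"
begin

definition time_scale :: "real set \<Rightarrow> bool" where
  "time_scale S \<longleftrightarrow> S \<noteq> {} \<and> closed S"

definition rho :: "real set \<Rightarrow> real \<Rightarrow> real" where
  "rho S t = (if {s\<in>S. s < t} = {} then t else Sup {s\<in>S. s < t})"

definition sigma :: "real set \<Rightarrow> real \<Rightarrow> real" where
  "sigma S t = (if {s\<in>S. s > t} = {} then t else Inf {s\<in>S. s > t})"

definition nu :: "real set \<Rightarrow> real \<Rightarrow> real" where
  "nu S t = t - rho S t"

definition Tk :: "real set \<Rightarrow> real set" where
  "Tk S = (if \<exists>m\<in>S. (\<forall>s\<in>S. m \<le> s) \<and> sigma S m > m
           then S - {m. m \<in> S \<and> (\<forall>s\<in>S. m \<le> s)} else S)"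

definition U_nbhd :: "real set \<Rightarrow> real \<Rightarrow> real \<Rightarrow> real set" where
  "U_nbhd S \<delta> t = {t - \<delta> <..< t + \<delta>} \<inter> S"

definition U_left :: "real set \<Rightarrow> real \<Rightarrow> real \<Rightarrow> real set" where
  "U_left S \<delta> t = {t - \<delta> <..< t} \<inter> S"

definition Qset :: "real set" where
  "Qset = {1 / real q | q. odd q \<and> q > 0}"

text \<open>x^alpha: real q-th root for alpha = 1/q in Q, otherwise powr
  (only applied to nonnegative arguments in that case).\<close>
definition frac_pow :: "real \<Rightarrow> real \<Rightarrow> real" where
  "frac_pow \<alpha> x = (if \<alpha> \<in> Qset then root (THE q. odd q \<and> q > 0 \<and> \<alpha> = 1 / real q) x
                    else x powr \<alpha>)"

definition has_nabla_frac_deriv ::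
  "real set \<Rightarrow> real \<Rightarrow> (real \<Rightarrow> real) \<Rightarrow> real \<Rightarrow> real \<Rightarrow> bool" where
  "has_nabla_frac_deriv S \<alpha> h t L \<longleftrightarrow> t \<in> Tk S \<and>
     (\<forall>\<epsilon>>0. \<exists>\<delta>>0. \<forall>s \<in> (if \<alpha> \<in> Qset then U_nbhd S \<delta> t else U_left S \<delta> t).
        \<bar>(h (rho S t) - h s) - L * frac_pow \<alpha> (rho S t - s)\<bar>
          \<le> \<epsilon> * (\<bar>rho S t - s\<bar> powr \<alpha>))"

end

theory Submission
  imports Defs
begin

(* Let x be the preimage of t and p = rho x. A strictly increasing f maps T order-isomorphically
   onto the closed set f`T, so it carries rho, sigma and T^k over, and its inverse g is continuous.
   If x is left-scattered, the order-1 nabla derivative of f at x is the chord slope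
   (f p - f x) / (p - x); near t the time scale f`T has no points in (f p, t), so the fractional
   difference quotient of g only has to be controlled for s >= t, where it is continuous in s and
   exact at s = t with value nu^(1-alpha) / f'(x). If x is left-dense, the order-1 nabla derivative
   is the ordinary derivative within T: the classical inverse function rule gives the case
   alpha = 1, and for alpha < 1 the bound |g s - g t| <= K |s - t| = o(|s - t|^alpha) gives the
   derivative 0. *)

lemma rho_le: "rho S t \<le> t"
  unfolding rho_def by (auto intro: cSup_least)

lemma rho_upper: "s \<in> S \<Longrightarrow> s < t \<Longrightarrow> s \<le> rho S t"
  unfolding rho_def by (auto intro!: cSup_upper bdd_aboveI[of _ t])

lemma rho_eqI:
  assumes "r \<in> S" "r < t" "\<And>s. s \<in> S \<Longrightarrow> s < t \<Longrightarrow> s \<le> r"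
  shows "rho S t = r"
  using assms unfolding rho_def by (auto intro!: cSup_eq_maximum)

lemma rho_mem:
  assumes "closed S" "t \<in> S"
  shows "rho S t \<in> S"
proof (cases "{s\<in>S. s < t} = {}")
  case False
  have "Sup {s\<in>S. s < t} \<in> closure {s\<in>S. s < t}"
    by (rule closure_contains_Sup[OF False]) (auto intro: bdd_aboveI[of _ t])
  also have "\<dots> \<subseteq> S"
    using assms(1) by (simp add: closure_minimal)
  finally show ?thesis
    unfolding rho_def by (simp only: False if_False)
qed (use assms in \<open>simp add: rho_def\<close>)

lemma sigma_ge: "t \<le> sigma S t"
  unfolding sigma_def by (auto intro: cInf_greatest)

lemma sigma_lower: "s \<in> S \<Longrightarrow> t < s \<Longrightarrow> sigma S t \<le> s"
  unfolding sigma_def by (auto intro!: cInf_lower bdd_belowI[of _ t])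

lemma sigma_eqI:
  assumes "r \<in> S" "t < r" "\<And>s. s \<in> S \<Longrightarrow> t < s \<Longrightarrow> r \<le> s"
  shows "sigma S t = r"
  using assms unfolding sigma_def by (auto intro!: cInf_eq_minimum)

lemma sigma_mem:
  assumes "closed S" "t \<in> S"
  shows "sigma S t \<in> S"
proof (cases "{s\<in>S. t < s} = {}")
  case False
  have "Inf {s\<in>S. t < s} \<in> closure {s\<in>S. t < s}"
    by (rule closure_contains_Inf[OF False]) (auto intro: bdd_belowI[of _ t])
  also have "\<dots> \<subseteq> S"
    using assms(1) by (simp add: closure_minimal)
  finally show ?thesis
    unfolding sigma_def by (simp only: False if_False)
qed (use assms in \<open>simp add: sigma_def\<close>)

lemma rho_image:
  fixes f :: "real \<Rightarrow> real"
  assumes T: "closed T" "closed (f ` T)" and f: "strict_mono_on T f" and x: "x \<in> T"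
  shows "rho (f ` T) (f x) = f (rho T x)"
proof (cases "rho T x < x")
  case True
  have "rho T x \<in> T"
    using rho_mem[OF T(1) x] .
  then show ?thesis
  proof (intro rho_eqI)
    fix s assume "s \<in> f ` T" "s < f x"
    then obtain y where "y \<in> T" "s = f y" "y < x"
      using f x by (auto simp: strict_mono_on_less)
    then show "s \<le> f (rho T x)"
      using rho_upper \<open>rho T x \<in> T\<close> f by (simp add: strict_mono_on_less_eq)
  qed (use True f x in \<open>auto simp: strict_mono_on_less\<close>)
next
  case False
  then have rho_x: "rho T x = x"
    using rho_le by (meson antisym not_less)
  have "rho (f ` T) (f x) = f x"
  proof (rule ccontr)
    assume "rho (f ` T) (f x) \<noteq> f x"
    then have less: "rho (f ` T) (f x) < f x"
      using rho_le order.not_eq_order_implies_strict by blast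
    obtain y where y: "y \<in> T" "rho (f ` T) (f x) = f y"
      using rho_mem[OF T(2)] x by (metis image_eqI imageE)
    have "rho T x = y"
    proof (rule rho_eqI)
      fix z assume "z \<in> T" "z < x"
      then have "f z \<le> f y"
        using rho_upper[of "f z" "f ` T" "f x"] y f x by (simp add: strict_mono_on_less)
      then show "z \<le> y"
        using \<open>z \<in> T\<close> y f by (simp add: strict_mono_on_less_eq)
    qed (use y less f x in \<open>auto simp: strict_mono_on_less\<close>)
    then show False
      using rho_x y less by simp
  qed
  then show ?thesis
    using rho_x by simp
qed

lemma sigma_image:
  fixes f :: "real \<Rightarrow> real"
  assumes T: "closed T" "closed (f ` T)" and f: "strict_mono_on T f" and x: "x \<in> T"
  shows "sigma (f ` T) (f x) = f (sigma T x)"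
proof (cases "x < sigma T x")
  case True
  have "sigma T x \<in> T"
    using sigma_mem[OF T(1) x] .
  then show ?thesis
  proof (intro sigma_eqI)
    fix s assume "s \<in> f ` T" "f x < s"
    then obtain y where "y \<in> T" "s = f y" "x < y"
      using f x by (auto simp: strict_mono_on_less)
    then show "f (sigma T x) \<le> s"
      using sigma_lower \<open>sigma T x \<in> T\<close> f by (simp add: strict_mono_on_less_eq)
  qed (use True f x in \<open>auto simp: strict_mono_on_less\<close>)
next
  case False
  then have sigma_x: "sigma T x = x"
    using sigma_ge by (meson antisym not_less)
  have "sigma (f ` T) (f x) = f x"
  proof (rule ccontr)
    assume "sigma (f ` T) (f x) \<noteq> f x"
    then have greater: "f x < sigma (f ` T) (f x)"
      using sigma_ge order.not_eq_order_implies_strict by metis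
    obtain y where y: "y \<in> T" "sigma (f ` T) (f x) = f y"
      using sigma_mem[OF T(2)] x by (metis image_eqI imageE)
    have "sigma T x = y"
    proof (rule sigma_eqI)
      fix z assume "z \<in> T" "x < z"
      then have "f y \<le> f z"
        using sigma_lower[of "f z" "f ` T" "f x"] y f x by (simp add: strict_mono_on_less)
      then show "y \<le> z"
        using \<open>z \<in> T\<close> y f by (simp add: strict_mono_on_less_eq)
    qed (use y greater f x in \<open>auto simp: strict_mono_on_less\<close>)
    then show False
      using sigma_x y greater by simp
  qed
  then show ?thesis
    using sigma_x by simp
qed

lemma Tk_subset: "Tk S \<subseteq> S"
  unfolding Tk_def by auto

lemma not_in_Tk_iff:
  assumes "x \<in> S"
  shows "x \<notin> Tk S \<longleftrightarrow> (\<forall>s\<in>S. x \<le> s) \<and> x < sigma S x"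
  using assms unfolding Tk_def by (auto, metis antisym)

lemma Tk_image:
  fixes f :: "real \<Rightarrow> real"
  assumes T: "closed T" "closed (f ` T)" and f: "strict_mono_on T f" and x: "x \<in> T"
    and fx: "f x \<in> Tk (f ` T)"
  shows "x \<in> Tk T"
proof (rule ccontr)
  assume "x \<notin> Tk T"
  then have "\<forall>s\<in>T. x \<le> s" "x < sigma T x"
    using not_in_Tk_iff x by blast+
  moreover have "sigma T x \<in> T"
    using sigma_mem[OF T(1) x] .
  ultimately have "\<forall>s\<in>f ` T. f x \<le> s" "f x < sigma (f ` T) (f x)"
    using sigma_image[OF T f x] f x by (auto simp: strict_mono_on_less_eq strict_mono_on_less)
  then show False
    using not_in_Tk_iff[of "f x" "f ` T"] fx x by blast
qed

lemma strict_mono_on_closed_bound_above: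
  fixes f :: "real \<Rightarrow> real"
  assumes T: "closed T" and f: "strict_mono_on T f" and x: "x \<in> T" "x < b"
  shows "\<exists>\<delta>>0. \<forall>y\<in>T. f y < f x + \<delta> \<longrightarrow> y < b"
proof (cases "T \<inter> {b..} = {}")
  case True
  then show ?thesis
    by (intro exI[of _ 1]) auto
next
  case False
  define m where "m = Inf (T \<inter> {b..})"
  have "bdd_below (T \<inter> {b..})"
    by (auto intro: bdd_belowI[of _ b])
  then have m: "m \<in> T \<inter> {b..}" "\<And>y. y \<in> T \<inter> {b..} \<Longrightarrow> m \<le> y"
    unfolding m_def using closed_contains_Inf[OF False] T by (auto intro: cInf_lower)
  show ?thesis
  proof (intro exI[of _ "f m - f x"] conjI ballI impI)
    show "0 < f m - f x"
      using m(1) x f by (auto simp: strict_mono_on_less)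
    fix y assume y: "y \<in> T" "f y < f x + (f m - f x)"
    show "y < b"
    proof (rule ccontr)
      assume "\<not> y < b"
      then have "f m \<le> f y"
        using m y(1) f by (simp add: strict_mono_on_less_eq)
      then show False
        using y(2) by simp
    qed
  qed
qed

lemma strict_mono_on_closed_bound_below:
  fixes f :: "real \<Rightarrow> real"
  assumes T: "closed T" and f: "strict_mono_on T f" and x: "x \<in> T" "a < x"
  shows "\<exists>\<delta>>0. \<forall>y\<in>T. f x - \<delta> < f y \<longrightarrow> a < y"
proof (cases "T \<inter> {..a} = {}")
  case True
  then show ?thesis
    by (intro exI[of _ 1]) auto
next
  case False
  define m where "m = Sup (T \<inter> {..a})"
  have "bdd_above (T \<inter> {..a})"
    by (auto intro: bdd_aboveI[of _ a])
  then have m: "m \<in> T \<inter> {..a}" "\<And>y. y \<in> T \<inter> {..a} \<Longrightarrow> y \<le> m"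
    unfolding m_def using closed_contains_Sup[OF False] T by (auto intro: cSup_upper)
  show ?thesis
  proof (intro exI[of _ "f x - f m"] conjI ballI impI)
    show "0 < f x - f m"
      using m(1) x f by (auto simp: strict_mono_on_less)
    fix y assume y: "y \<in> T" "f x - (f x - f m) < f y"
    show "a < y"
    proof (rule ccontr)
      assume "\<not> a < y"
      then have "f y \<le> f m"
        using m y(1) f by (simp add: strict_mono_on_less_eq)
      then show False
        using y(2) by simp
    qed
  qed
qed

lemma continuous_the_inv_into_strict_mono_on:
  fixes f :: "real \<Rightarrow> real"
  assumes T: "closed T" and f: "strict_mono_on T f" and x: "x \<in> T"
  shows "continuous (at (f x) within f ` T) (the_inv_into T f)"
  unfolding continuous_within_eps_delta
proof (intro allI impI)
  fix \<eta> :: real assume "0 < \<eta>"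
  obtain d1 where d1: "d1 > 0" "\<forall>y\<in>T. f y < f x + d1 \<longrightarrow> y < x + \<eta>"
    using strict_mono_on_closed_bound_above[OF T f x, of "x + \<eta>"] \<open>0 < \<eta>\<close> by auto
  obtain d2 where d2: "d2 > 0" "\<forall>y\<in>T. f x - d2 < f y \<longrightarrow> x - \<eta> < y"
    using strict_mono_on_closed_bound_below[OF T f x, of "x - \<eta>"] \<open>0 < \<eta>\<close> by auto
  have inj: "inj_on f T"
    using f strict_mono_on_imp_inj_on by blast
  show "\<exists>\<delta>>0. \<forall>s\<in>f ` T. dist s (f x) < \<delta> \<longrightarrow>
      dist (the_inv_into T f s) (the_inv_into T f (f x)) < \<eta>"
  proof (intro exI[of _ "min d1 d2"] conjI ballI impI)
    fix s assume "s \<in> f ` T" "dist s (f x) < min d1 d2"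
    then obtain y where "y \<in> T" "s = f y" "dist (f y) (f x) < min d1 d2"
      by blast
    then show "dist (the_inv_into T f s) (the_inv_into T f (f x)) < \<eta>"
      using d1 d2 inj x by (auto simp: the_inv_into_f_f dist_real_def abs_less_iff)
  qed (use d1 d2 in simp)
qed

lemma one_in_Qset: "1 \<in> Qset"
  unfolding Qset_def by (intro CollectI exI[of _ "1::nat"]) simp

lemma Qset_pos: "\<alpha> \<in> Qset \<Longrightarrow> 0 < \<alpha>"
  unfolding Qset_def by auto

lemma frac_pow_Qset_root:
  assumes "\<alpha> \<in> Qset"
  obtains q where "q > 0" "\<alpha> = 1 / real q" "frac_pow \<alpha> = root q"
proof -
  obtain q where q: "odd q" "q > 0" "\<alpha> = 1 / real q"
    using assms unfolding Qset_def by auto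
  have "(THE q. odd q \<and> q > 0 \<and> \<alpha> = 1 / real q) = q"
    by (rule the_equality) (use q in auto)
  then show ?thesis
    using that q assms unfolding frac_pow_def by auto
qed

lemma frac_pow_Qset:
  assumes "\<alpha> \<in> Qset"
  shows "frac_pow \<alpha> x = sgn x * \<bar>x\<bar> powr \<alpha>"
proof -
  obtain q where q: "q > 0" "\<alpha> = 1 / real q" "frac_pow \<alpha> = root q"
    using frac_pow_Qset_root[OF assms] .
  have "root q x = sgn (root q x) * \<bar>root q x\<bar>"
    by (simp add: sgn_mult_abs)
  also have "\<dots> = sgn x * \<bar>x\<bar> powr \<alpha>"
    using q by (simp add: sgn_root real_root_abs[symmetric] root_powr_inverse)
  finally show ?thesis
    using q by simp
qed

lemma frac_pow_one: "frac_pow 1 x = x"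
  by (simp add: frac_pow_Qset one_in_Qset sgn_mult_abs)

lemma isCont_frac_pow_Qset: "\<alpha> \<in> Qset \<Longrightarrow> isCont (frac_pow \<alpha>) x"
  by (metis frac_pow_Qset_root isCont_real_root)

lemma ball_U_nbhd_iff:
  "(\<forall>s\<in>U_nbhd S \<delta> t. P s) \<longleftrightarrow> (\<forall>s\<in>S. \<bar>s - t\<bar> < \<delta> \<longrightarrow> P s)"
  unfolding U_nbhd_def by (auto simp: abs_less_iff)

lemma nabla_nbhd_subset:
  "(if \<alpha> \<in> Qset then U_nbhd S \<delta> t else U_left S \<delta> t) \<subseteq> {s\<in>S. \<bar>s - t\<bar> < \<delta>}"
  unfolding U_nbhd_def U_left_def by (auto simp: abs_less_iff)

lemma has_nabla_frac_deriv_one_iff: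
  "has_nabla_frac_deriv S 1 h t L \<longleftrightarrow> t \<in> Tk S \<and>
     (\<forall>\<epsilon>>0. \<exists>\<delta>>0. \<forall>s\<in>S. \<bar>s - t\<bar> < \<delta> \<longrightarrow>
        \<bar>h (rho S t) - h s - L * (rho S t - s)\<bar> \<le> \<epsilon> * \<bar>rho S t - s\<bar>)"
  unfolding has_nabla_frac_deriv_def if_P[OF one_in_Qset] ball_U_nbhd_iff frac_pow_one
    powr_one' abs_abs ..

lemma has_nabla_frac_deriv_one_left_dense_iff:
  assumes "rho S t = t"
  shows "has_nabla_frac_deriv S 1 h t L \<longleftrightarrow>
           t \<in> Tk S \<and> (h has_real_derivative L) (at t within S)"
proof -
  have "\<bar>h t - h s - L * (t - s)\<bar> = \<bar>h s - h t - L * (s - t)\<bar>" for s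
    by (simp add: algebra_simps)
  moreover have "\<bar>t - s\<bar> = \<bar>s - t\<bar>" for s :: real
    by (rule abs_minus_commute)
  ultimately show ?thesis
    unfolding has_nabla_frac_deriv_one_iff assms has_field_derivative_def
      has_derivative_within_alt real_norm_def
    by (simp add: bounded_linear_mult_right)
qed

lemma has_nabla_frac_deriv_one_left_scattered:
  assumes der: "has_nabla_frac_deriv S 1 h t L" and scattered: "rho S t < t"
  shows "h (rho S t) - h t = L * (rho S t - t)"
proof -
  let ?a = "\<bar>h (rho S t) - h t - L * (rho S t - t)\<bar>"
  have t: "t \<in> S"
    using der Tk_subset unfolding has_nabla_frac_deriv_def by blast
  have "?a \<le> 0 + e" if "e > 0" for e
  proof -
    have "e / (t - rho S t) > 0"
      using that scattered by simp
    then obtain \<delta> where "\<delta> > 0" and est: "\<forall>s\<in>S. \<bar>s - t\<bar> < \<delta> \<longrightarrow>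
        \<bar>h (rho S t) - h s - L * (rho S t - s)\<bar> \<le> e / (t - rho S t) * \<bar>rho S t - s\<bar>"
      using der unfolding has_nabla_frac_deriv_one_iff by blast
    have "?a \<le> e / (t - rho S t) * \<bar>rho S t - t\<bar>"
      using est t \<open>\<delta> > 0\<close> by simp
    also have "\<dots> = e"
      using scattered by simp
    finally show ?thesis
      by simp
  qed
  then show ?thesis
    using field_le_epsilon[of ?a 0] by simp
qed

(* For alpha outside Q only points of S in (rho t, t) are tested, and there are none. *)
lemma has_nabla_frac_deriv_left_scattered_not_Qset:
  assumes "\<alpha> \<notin> Qset" "t \<in> Tk S" "rho S t < t"
  shows "has_nabla_frac_deriv S \<alpha> h t L"
proof -
  have "U_left S (t - rho S t) t = {}"
    using rho_upper[of _ S t] by (force simp: U_left_def)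
  then show ?thesis
    using assms unfolding has_nabla_frac_deriv_def by (auto intro!: exI[of _ "t - rho S t"])
qed

lemma has_nabla_frac_deriv_left_scattered_Qset:
  assumes \<alpha>: "\<alpha> \<in> Qset" and t: "t \<in> Tk S" and scattered: "rho S t < t"
    and h: "continuous (at t within S) h"
  shows "has_nabla_frac_deriv S \<alpha> h t ((h (rho S t) - h t) / frac_pow \<alpha> (rho S t - t))"
proof -
  define r where "r = rho S t"
  define L where "L = (h r - h t) / frac_pow \<alpha> (r - t)"
  define \<phi> where "\<phi> s = h r - h s - L * frac_pow \<alpha> (r - s)" for s
  have "frac_pow \<alpha> (r - t) \<noteq> 0"
    using \<alpha> scattered by (simp add: frac_pow_Qset r_def)
  then have "\<phi> t = 0"
    by (simp add: \<phi>_def L_def)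
  have "isCont (\<lambda>s. frac_pow \<alpha> (r - s)) t"
    using isCont_o2[where f="\<lambda>s. r - s" and a=t and g="frac_pow \<alpha>"] isCont_frac_pow_Qset[OF \<alpha>] by simp
  then have "continuous (at t within S) (\<lambda>s. frac_pow \<alpha> (r - s))"
    by (rule continuous_at_imp_continuous_at_within)
  then have "continuous (at t within S) \<phi>"
    unfolding \<phi>_def using h by (intro continuous_diff continuous_mult continuous_const)
  have "\<exists>\<delta>>0. \<forall>s\<in>S. \<bar>s - t\<bar> < \<delta> \<longrightarrow> \<bar>\<phi> s\<bar> \<le> \<epsilon> * \<bar>r - s\<bar> powr \<alpha>" if "\<epsilon> > 0" for \<epsilon>
  proof -
    have \<nu>: "0 < t - r"
      using scattered r_def by simp
    then have "0 < \<epsilon> * (t - r) powr \<alpha>"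
      using that by simp
    then obtain d where "d > 0" and d: "\<forall>s\<in>S. dist s t < d \<longrightarrow> dist (\<phi> s) (\<phi> t) < \<epsilon> * (t - r) powr \<alpha>"
      using \<open>continuous (at t within S) \<phi>\<close> unfolding continuous_within_eps_delta by blast
    show ?thesis
    proof (intro exI[of _ "min d (t - r)"] conjI ballI impI)
      fix s assume s: "s \<in> S" "\<bar>s - t\<bar> < min d (t - r)"
      have "t \<le> s"
        using rho_upper[OF s(1), of t] s(2) r_def by force
      have "\<bar>\<phi> s\<bar> < \<epsilon> * (t - r) powr \<alpha>"
        using d s \<open>\<phi> t = 0\<close> by (simp add: dist_real_def)
      also have "\<dots> \<le> \<epsilon> * \<bar>r - s\<bar> powr \<alpha>"
        using \<open>t \<le> s\<close> \<nu> Qset_pos[OF \<alpha>] that by (intro mult_left_mono powr_mono2) auto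
      finally show "\<bar>\<phi> s\<bar> \<le> \<epsilon> * \<bar>r - s\<bar> powr \<alpha>"
        by (rule less_imp_le)
    qed (use \<nu> \<open>d > 0\<close> in simp)
  qed
  then show ?thesis
    using t unfolding has_nabla_frac_deriv_def
    by (simp add: \<alpha> ball_U_nbhd_iff \<phi>_def L_def r_def)
qed

lemma has_nabla_frac_deriv_left_dense_zero:
  assumes \<alpha>: "0 < \<alpha>" "\<alpha> < 1" and t: "t \<in> Tk S" and dense: "rho S t = t"
    and h: "(h has_real_derivative D) (at t within S)"
  shows "has_nabla_frac_deriv S \<alpha> h t 0"
proof -
  define K where "K = \<bar>D\<bar> + 1"
  have K: "K > 0"
    by (simp add: K_def add_nonneg_pos)
  obtain d where "d > 0" and lip: "\<forall>s\<in>S. \<bar>s - t\<bar> < d \<longrightarrow> \<bar>h t - h s\<bar> \<le> K * \<bar>s - t\<bar>"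
  proof -
    obtain d where "d > 0" and d: "\<forall>s\<in>S. \<bar>s - t\<bar> < d \<longrightarrow> \<bar>h s - h t - D * (s - t)\<bar> \<le> 1 * \<bar>s - t\<bar>"
      using h unfolding has_field_derivative_def has_derivative_within_alt real_norm_def
      by (meson zero_less_one)
    have tri: "\<bar>h t - h s\<bar> \<le> \<bar>h s - h t - D * (s - t)\<bar> + \<bar>D\<bar> * \<bar>s - t\<bar>" for s
    proof -
      have "\<bar>h t - h s\<bar> = \<bar>(h s - h t - D * (s - t)) + D * (s - t)\<bar>"
        by (simp add: abs_minus_commute)
      also have "\<dots> \<le> \<bar>h s - h t - D * (s - t)\<bar> + \<bar>D\<bar> * \<bar>s - t\<bar>"
        unfolding abs_mult[symmetric] by (rule abs_triangle_ineq)
      finally show ?thesis .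
    qed
    show thesis
    proof (rule that[OF \<open>d > 0\<close>], intro ballI impI)
      fix s assume "s \<in> S" "\<bar>s - t\<bar> < d"
      then have "\<bar>h s - h t - D * (s - t)\<bar> \<le> \<bar>s - t\<bar>"
        using d by simp
      moreover have "K * \<bar>s - t\<bar> = \<bar>D\<bar> * \<bar>s - t\<bar> + \<bar>s - t\<bar>"
        by (simp add: K_def distrib_right)
      ultimately show "\<bar>h t - h s\<bar> \<le> K * \<bar>s - t\<bar>"
        using tri[of s] by linarith
    qed
  qed
  have small: "\<exists>\<delta>>0. \<forall>s\<in>S. \<bar>s - t\<bar> < \<delta> \<longrightarrow> \<bar>h t - h s\<bar> \<le> \<epsilon> * \<bar>t - s\<bar> powr \<alpha>"
    if "\<epsilon> > 0" for \<epsilon>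
  proof (intro exI[of _ "min d ((\<epsilon> / K) powr (1 / (1 - \<alpha>)))"] conjI ballI impI)
    fix s assume s: "s \<in> S" "\<bar>s - t\<bar> < min d ((\<epsilon> / K) powr (1 / (1 - \<alpha>)))"
    define u where "u = \<bar>t - s\<bar>"
    have "u powr (1 - \<alpha>) \<le> ((\<epsilon> / K) powr (1 / (1 - \<alpha>))) powr (1 - \<alpha>)"
      using s \<alpha> by (intro powr_mono2) (auto simp: u_def abs_minus_commute)
    also have "\<dots> = \<epsilon> / K"
      using \<alpha> K that by (simp add: powr_powr)
    finally have "K * u powr (1 - \<alpha>) \<le> \<epsilon>"
      using K by (simp add: field_simps)
    then have bound: "K * u powr (1 - \<alpha>) * u powr \<alpha> \<le> \<epsilon> * u powr \<alpha>"
      by (simp add: mult_right_mono)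
    have "\<bar>h t - h s\<bar> \<le> K * u"
      using lip s by (simp add: u_def abs_minus_commute)
    also have "\<dots> = K * u powr (1 - \<alpha>) * u powr \<alpha>"
      by (simp add: u_def powr_add[symmetric])
    also have "\<dots> \<le> \<epsilon> * u powr \<alpha>"
      by (fact bound)
    finally show "\<bar>h t - h s\<bar> \<le> \<epsilon> * \<bar>t - s\<bar> powr \<alpha>"
      by (simp add: u_def)
  qed (use \<open>d > 0\<close> that K in simp)
  show ?thesis
    unfolding has_nabla_frac_deriv_def dense
  proof (intro conjI t allI impI)
    fix \<epsilon> :: real assume "\<epsilon> > 0"
    then obtain \<delta> where "\<delta> > 0"
      and est: "\<forall>s\<in>S. \<bar>s - t\<bar> < \<delta> \<longrightarrow> \<bar>h t - h s\<bar> \<le> \<epsilon> * \<bar>t - s\<bar> powr \<alpha>"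
      using small by blast
    show "\<exists>\<delta>>0. \<forall>s\<in>(if \<alpha> \<in> Qset then U_nbhd S \<delta> t else U_left S \<delta> t).
        \<bar>(h t - h s) - 0 * frac_pow \<alpha> (t - s)\<bar> \<le> \<epsilon> * \<bar>t - s\<bar> powr \<alpha>"
    proof (intro exI[of _ \<delta>] conjI ballI)
      fix s assume "s \<in> (if \<alpha> \<in> Qset then U_nbhd S \<delta> t else U_left S \<delta> t)"
      then have "s \<in> S" "\<bar>s - t\<bar> < \<delta>"
        using nabla_nbhd_subset by blast+
      then show "\<bar>(h t - h s) - 0 * frac_pow \<alpha> (t - s)\<bar> \<le> \<epsilon> * \<bar>t - s\<bar> powr \<alpha>"
        using est by simp
    qed (fact \<open>\<delta> > 0\<close>)
  qed
qed

lemma has_nabla_frac_deriv_inverse_left_scattered: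
  fixes f :: "real \<Rightarrow> real"
  assumes T: "closed T" "closed (f ` T)" and f: "strict_mono_on T f"
    and der: "has_nabla_frac_deriv T 1 f x c" and scattered: "rho T x < x"
    and fx: "f x \<in> Tk (f ` T)" and \<alpha>: "0 < \<alpha>"
  shows "has_nabla_frac_deriv (f ` T) \<alpha> (the_inv_into T f) (f x)
           (nu (f ` T) (f x) powr (1 - \<alpha>) / c)"
proof -
  define p where "p = rho T x"
  have x: "x \<in> T"
    using der Tk_subset unfolding has_nabla_frac_deriv_def by blast
  have inj: "inj_on f T"
    using f strict_mono_on_imp_inj_on by blast
  have p: "p \<in> T" "f p < f x"
    using rho_mem[OF T(1) x] scattered f x by (auto simp: p_def strict_mono_on_less)
  have rho_fx: "rho (f ` T) (f x) = f p"
    using rho_image[OF T f x] by (simp add: p_def)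
  have slope: "f p - f x = c * (p - x)"
    using has_nabla_frac_deriv_one_left_scattered[OF der scattered] by (simp add: p_def)
  define \<nu> where "\<nu> = nu (f ` T) (f x)"
  have \<nu>: "\<nu> = f x - f p" "\<nu> > 0"
    using rho_fx p by (auto simp: \<nu>_def nu_def)
  show ?thesis
  proof (cases "\<alpha> \<in> Qset")
    case False
    then show ?thesis
      using has_nabla_frac_deriv_left_scattered_not_Qset fx rho_fx p by simp
  next
    case True
    have "has_nabla_frac_deriv (f ` T) \<alpha> (the_inv_into T f) (f x)
        ((the_inv_into T f (f p) - the_inv_into T f (f x)) / frac_pow \<alpha> (f p - f x))"
      using has_nabla_frac_deriv_left_scattered_Qset[OF True fx]
        continuous_the_inv_into_strict_mono_on[OF T(1) f x] rho_fx p by simp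
    moreover have "(the_inv_into T f (f p) - the_inv_into T f (f x)) / frac_pow \<alpha> (f p - f x)
        = \<nu> powr (1 - \<alpha>) / c"
    proof -
      have "c \<noteq> 0"
        using slope p by auto
      then have "p - x = - \<nu> / c"
        using slope \<nu>(1) by (simp add: field_simps)
      moreover have "frac_pow \<alpha> (f p - f x) = - (\<nu> powr \<alpha>)"
        using True \<nu> by (simp add: frac_pow_Qset)
      ultimately have "(the_inv_into T f (f p) - the_inv_into T f (f x)) / frac_pow \<alpha> (f p - f x)
          = \<nu> / \<nu> powr \<alpha> / c"
        using inj x p by (simp add: the_inv_into_f_f)
      also have "\<dots> = \<nu> powr (1 - \<alpha>) / c"
        using \<nu>(2) by (simp add: powr_diff)
      finally show ?thesis .
    qed
    ultimately show ?thesis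
      by (simp add: \<nu>_def)
  qed
qed

lemma has_nabla_frac_deriv_inverse_left_dense:
  fixes f :: "real \<Rightarrow> real"
  assumes T: "closed T" "closed (f ` T)" and f: "strict_mono_on T f"
    and der: "has_nabla_frac_deriv T 1 f x c" "c \<noteq> 0" and dense: "rho T x = x"
    and fx: "f x \<in> Tk (f ` T)" and \<alpha>: "0 < \<alpha>" "\<alpha> \<le> 1"
  shows "has_nabla_frac_deriv (f ` T) \<alpha> (the_inv_into T f) (f x) (if \<alpha> = 1 then 1 / c else 0)"
proof -
  have x: "x \<in> T"
    using der Tk_subset unfolding has_nabla_frac_deriv_def by blast
  have inj: "inj_on f T"
    using f strict_mono_on_imp_inj_on by blast
  have rho_fx: "rho (f ` T) (f x) = f x"
    using rho_image[OF T f x] dense by simp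
  have "(f has_real_derivative c) (at x within T)"
    using der(1) has_nabla_frac_deriv_one_left_dense_iff[OF dense] by blast
  then have "(the_inv_into T f has_real_derivative 1 / c) (at (f x) within f ` T)"
    unfolding has_field_derivative_def
    using der(2) x inj continuous_the_inv_into_strict_mono_on[OF T(1) f x]
    by (intro has_derivative_inverse_within)
      (auto simp: fun_eq_iff the_inv_into_f_f intro: bounded_linear.linear[OF bounded_linear_divide])
  then show ?thesis
    using has_nabla_frac_deriv_one_left_dense_iff[OF rho_fx] fx
      has_nabla_frac_deriv_left_dense_zero[OF _ _ fx rho_fx] \<alpha>
    by (cases "\<alpha> = 1") auto
qed

theorem mainTheorem9:
  fixes T :: "real set" and f f' :: "real \<Rightarrow> real" and \<alpha> t :: real
  assumes "time_scale T"
    and "0 < \<alpha>" and "\<alpha> \<le> 1"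
    and "strict_mono_on T f"
    and "time_scale (f ` T)"
    and "\<forall>x\<in>Tk T. has_nabla_frac_deriv T 1 f x (f' x)"
    and "continuous_on (Tk T) f'"
    and "t \<in> Tk (f ` T)"
    and "f' (the_inv_into T f t) \<noteq> 0"
  shows "has_nabla_frac_deriv (f ` T) \<alpha> (the_inv_into T f) t
           (if \<alpha> \<noteq> 1 then nu (f ` T) t powr (1 - \<alpha>) / f' (the_inv_into T f t)
            else 1 / f' (the_inv_into T f t))"
proof -
  have T: "closed T" "closed (f ` T)"
    using assms(1,5) unfolding time_scale_def by auto
  obtain x where x: "x \<in> T" "t = f x"
    using assms(8) Tk_subset by blast
  have inv: "the_inv_into T f t = x"
    using x assms(4) strict_mono_on_imp_inj_on the_inv_into_f_f by metis
  have der: "has_nabla_frac_deriv T 1 f x (f' x)"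
    using assms(6) Tk_image[OF T assms(4) x(1)] assms(8) x(2) by blast
  show ?thesis
  proof (cases "rho T x < x")
    case True
    then have "nu (f ` T) t > 0"
      using rho_image[OF T assms(4) x(1)] rho_mem[OF T(1) x(1)] assms(4) x
      by (simp add: nu_def strict_mono_on_less)
    moreover have "has_nabla_frac_deriv (f ` T) \<alpha> (the_inv_into T f) t
        (nu (f ` T) t powr (1 - \<alpha>) / f' x)"
      using has_nabla_frac_deriv_inverse_left_scattered[OF T assms(4) der True] assms(2,8) x
      by simp
    ultimately show ?thesis
      using inv by (cases "\<alpha> = 1") auto
  next
    case False
    then have "rho T x = x"
      using rho_le antisym not_less by metis
    moreover have "nu (f ` T) t = 0"
      using rho_image[OF T assms(4) x(1)] calculation x(2) by (simp add: nu_def)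
    ultimately show ?thesis
      using has_nabla_frac_deriv_inverse_left_dense[OF T assms(4) der _ _ _ assms(2,3)] assms(8,9) x inv
      by auto
  qed
qed

end
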